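(* In the $2$-coloured operad $\mathrm{Bulle}$, the set $G$ of the eight bubbles of arity $2$ is the generating set of $\mathrm{Bulle}$. That is, the smallest coloured suboperad of $\mathrm{Bulle}$ containing $G$ is $\mathrm{Bulle}$ itself, and $G$ is minimal for inclusion with this property.
   Context: The $2$-coloured operad $\mathrm{Bulle}$ can be described as follows. For $n\ge2$, its elements of arity $n$ (called bubbles) are the pairs $(c;d_1\cdots d_n)$ with $c\in\{1,2\}$ and $d_1,\dots,d_n\in\{1,2\}$, with output colour $c$ and $i$th input colour $d_i$. In addition, there are two units $\mathbf 1_1,\mathbf 1_2$ of arity $1$, where $\mathbf 1_c$ has output and input colour $c$. The partial composition $(c;d_1\cdots d_n)\circ_i(e;f_1\cdots f_m)$ is defined exactly when $d_i=e$, and equals $(c;d_1\cdots d_{i-1}f_1\cdots f_m d_{i+1}\cdots d_n)$. Geometrically, a bubble of arity $n$ is a polygon with $n+1$ vertices whose base and $n$ edges are each either blue or uncoloured, with no coloured diagonals. The output colour is $1$ iff the base is blue, and the $i$th input colour is $2$ iff the $i$th edge is blue. Composition glues the base of the second bubble onto the $i$th edge of the first. A coloured suboperad is a subset closed under defined compositions and containing both units. *)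

theory Defs
  imports Main
begin

datatype colour = C1 | C2

text \<open>An element of the 2-coloured operad Bulle: (output colour, list of input colours).\<close>
type_synonym bubble = "colour \<times> colour list"

definition unit_elt :: "colour \<Rightarrow> bubble" where
  "unit_elt c = (c, [c])"

definition Bulle :: "bubble set" where
  "Bulle = {x. length (snd x) \<ge> 2} \<union> {unit_elt C1, unit_elt C2}"

definition arity :: "bubble \<Rightarrow> nat" where
  "arity x = length (snd x)"

text \<open>Partial composition x o_(i+1) y (positions 0-indexed); defined when
  i < arity x and the i-th input colour of x equals the output colour of y.\<close>
definition comp_defined :: "bubble \<Rightarrow> nat \<Rightarrow> bubble \<Rightarrow> bool" where
  "comp_defined x i y \<longleftrightarrow> i < length (snd x) \<and> snd x ! i = fst y"

definition pcomp :: "bubble \<Rightarrow> nat \<Rightarrow> bubble \<Rightarrow> bubble" where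
  "pcomp x i y = (fst x, take i (snd x) @ snd y @ drop (Suc i) (snd x))"

definition is_suboperad :: "bubble set \<Rightarrow> bool" where
  "is_suboperad S \<longleftrightarrow> S \<subseteq> Bulle \<and> unit_elt C1 \<in> S \<and> unit_elt C2 \<in> S \<and>
     (\<forall>x\<in>S. \<forall>y\<in>S. \<forall>i. comp_defined x i y \<longrightarrow> pcomp x i y \<in> S)"

definition generated_suboperad :: "bubble set \<Rightarrow> bubble set" where
  "generated_suboperad G = \<Inter>{S. is_suboperad S \<and> G \<subseteq> S}"

definition arity2_bubbles :: "bubble set" where
  "arity2_bubbles = {x \<in> Bulle. arity x = 2}"

end

theory Submission
  imports Defs
begin

text \<open>Arities add up to one less under composition, and only the units have arity 1.
  Grafting a bubble of arity \<open>n\<close> onto the second input of an arity-2 bubble yields any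
  bubble of arity \<open>n + 1\<close>, so the arity-2 bubbles generate everything by induction. Conversely,
  an arity-2 bubble only arises from a composition in which one factor is a unit and the result
  is the other factor; hence removing a single arity-2 bubble from \<open>Bulle\<close> leaves a
  suboperad, and no proper subset of the generators suffices.\<close>

lemma UNIV_colour: "(UNIV :: colour set) = {C1, C2}"
  using colour.exhaust by auto

lemma arity2_bubbles_eq: "arity2_bubbles = (\<lambda>(c, a, b). (c, [a, b])) ` UNIV"
  unfolding arity2_bubbles_def Bulle_def arity_def unit_elt_def
  by (auto simp: image_iff length_Suc_conv numeral_2_eq_2)

lemma pair_mem_arity2_bubbles [simp]: "(c, [a, b]) \<in> arity2_bubbles"
  by (simp add: arity2_bubbles_def Bulle_def arity_def)

lemma card_arity2_bubbles: "card arity2_bubbles = 8"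
proof -
  have "inj (\<lambda>(c :: colour, a :: colour, b :: colour). (c, [a, b]))"
    by (auto intro: injI)
  then have "card arity2_bubbles = card (UNIV :: (colour \<times> colour \<times> colour) set)"
    unfolding arity2_bubbles_eq by (rule card_image)
  also have "\<dots> = 8"
    by (simp add: UNIV_Times_UNIV[symmetric] card_cartesian_product UNIV_colour
        del: UNIV_Times_UNIV)
  finally show ?thesis .
qed

lemma arity_ge_1_if_Bulle: "x \<in> Bulle \<Longrightarrow> arity x \<ge> 1"
  by (auto simp: Bulle_def unit_elt_def arity_def)

lemma unit_if_arity_1: "x \<in> Bulle \<Longrightarrow> arity x = 1 \<Longrightarrow> \<exists>c. x = unit_elt c"
  by (auto simp: Bulle_def unit_elt_def arity_def)

lemma arity_pcomp: "comp_defined x i y \<Longrightarrow> arity (pcomp x i y) = arity x + arity y - 1"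
  by (auto simp: comp_defined_def pcomp_def arity_def)

lemma pcomp_unit_left: "comp_defined (unit_elt c) i y \<Longrightarrow> pcomp (unit_elt c) i y = y"
  by (cases y) (auto simp: comp_defined_def pcomp_def unit_elt_def)

lemma pcomp_unit_right: "comp_defined x i (unit_elt c) \<Longrightarrow> pcomp x i (unit_elt c) = x"
  by (cases x) (auto simp: comp_defined_def pcomp_def unit_elt_def id_take_nth_drop[symmetric])

lemma suboperad_pcomp_closed:
  "is_suboperad S \<Longrightarrow> x \<in> S \<Longrightarrow> y \<in> S \<Longrightarrow> comp_defined x i y \<Longrightarrow> pcomp x i y \<in> S"
  unfolding is_suboperad_def by blast

lemma generated_suboperad_least:
  "is_suboperad S \<Longrightarrow> G \<subseteq> S \<Longrightarrow> generated_suboperad G \<subseteq> S"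
  unfolding generated_suboperad_def by auto

lemma is_suboperad_Bulle: "is_suboperad Bulle"
  unfolding is_suboperad_def
proof (intro conjI ballI allI impI)
  fix x y i assume x: "x \<in> Bulle" and y: "y \<in> Bulle" and xy: "comp_defined x i y"
  consider c where "x = unit_elt c" | "arity x \<ge> 2"
    using x arity_ge_1_if_Bulle unit_if_arity_1 by fastforce
  then show "pcomp x i y \<in> Bulle"
  proof cases
    case 1
    then show ?thesis using y xy pcomp_unit_left by simp
  next
    case 2
    then have "arity (pcomp x i y) \<ge> 2"
      using arity_ge_1_if_Bulle[OF y] arity_pcomp[OF xy] by linarith
    then show ?thesis by (simp add: Bulle_def arity_def)
  qed
qed (auto simp: Bulle_def)

lemma suboperad_contains_Bulle:
  assumes S: "is_suboperad S" and gens: "arity2_bubbles \<subseteq> S"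
  shows "Bulle \<subseteq> S"
proof -
  have "(c, ds) \<in> S" if "length ds \<ge> 2" for c ds
    using that
  proof (induction ds arbitrary: c)
    case Nil
    then show ?case by simp
  next
    case (Cons d ds)
    show ?case
    proof (cases "length ds \<ge> 2")
      case True
      have "(c, [d, C1]) \<in> S" "(C1, ds) \<in> S"
        using gens Cons.IH[OF True] by auto
      then have "pcomp (c, [d, C1]) 1 (C1, ds) \<in> S"
        by (rule suboperad_pcomp_closed[OF S]) (simp add: comp_defined_def)
      then show ?thesis by (simp add: pcomp_def)
    next
      case False
      then obtain e where "ds = [e]"
        using Cons.prems by (cases ds) (auto simp: Suc_le_eq)
      then show ?thesis using gens by auto
    qed
  qed
  moreover have "unit_elt C1 \<in> S" "unit_elt C2 \<in> S"
    using S by (auto simp: is_suboperad_def)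
  ultimately show ?thesis by (auto simp: Bulle_def)
qed

lemma generated_arity2_bubbles: "generated_suboperad arity2_bubbles = Bulle"
proof
  show "generated_suboperad arity2_bubbles \<subseteq> Bulle"
    by (rule generated_suboperad_least[OF is_suboperad_Bulle]) (auto simp: arity2_bubbles_def)
  show "Bulle \<subseteq> generated_suboperad arity2_bubbles"
    unfolding generated_suboperad_def using suboperad_contains_Bulle by blast
qed

lemma pcomp_trivial_if_arity_2:
  assumes "x \<in> Bulle" "y \<in> Bulle" "comp_defined x i y" "arity (pcomp x i y) = 2"
  shows "pcomp x i y = x \<or> pcomp x i y = y"
proof -
  have "arity x = 1 \<or> arity y = 1"
    using assms(4) arity_pcomp[OF assms(3)] arity_ge_1_if_Bulle[OF assms(1)]
      arity_ge_1_if_Bulle[OF assms(2)] by linarith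
  then show ?thesis
    using assms unit_if_arity_1 pcomp_unit_left pcomp_unit_right by metis
qed

lemma is_suboperad_Bulle_remove_arity2:
  assumes g: "arity g = 2"
  shows "is_suboperad (Bulle - {g})"
  unfolding is_suboperad_def
proof (intro conjI ballI allI impI)
  fix x y i assume x: "x \<in> Bulle - {g}" and y: "y \<in> Bulle - {g}" and xy: "comp_defined x i y"
  have "pcomp x i y \<in> Bulle"
    using x y xy is_suboperad_Bulle by (auto intro: suboperad_pcomp_closed)
  moreover have "pcomp x i y \<noteq> g"
    using x y xy g pcomp_trivial_if_arity_2 by fastforce
  ultimately show "pcomp x i y \<in> Bulle - {g}" by simp
qed (use g in \<open>auto simp: Bulle_def unit_elt_def arity_def\<close>)

theorem proposition2p3:
  shows "card arity2_bubbles = 8 \<and>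
         generated_suboperad arity2_bubbles = Bulle \<and>
         (\<forall>H. H \<subset> arity2_bubbles \<longrightarrow> generated_suboperad H \<noteq> Bulle)"
proof (intro conjI allI impI card_arity2_bubbles generated_arity2_bubbles)
  fix H assume H: "H \<subset> arity2_bubbles"
  then obtain g where g: "g \<in> Bulle" "arity g = 2" "g \<notin> H"
    by (auto simp: arity2_bubbles_def)
  have "generated_suboperad H \<subseteq> Bulle - {g}"
    using H g by (intro generated_suboperad_least is_suboperad_Bulle_remove_arity2)
      (auto simp: arity2_bubbles_def)
  then show "generated_suboperad H \<noteq> Bulle"
    using g(1) by blast
qed

end
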